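(* Let $A, C, D$ be binary random variables, with $A$ taking values $a,\overline{a}$, $C$ taking values $c,\overline{c}$, $D$ taking values $d,\overline{d}$, and let $Y$ be a real random variable with finite expectation. Suppose the joint distribution factorizes as \[ p(A,C,D,Y)=p(D)\,p(C\mid D)\,p(A\mid C)\,p(Y\mid A,C). \] Assume that $C$ and $D$ are dependent, and that every event $\{A=x, C=y, D=z\}$ has positive probability. If $E[Y\mid A,D]$ and $E[A\mid D]$ are both nondecreasing or both nonincreasing in $D$, then $RD_{obs}\ge RD_{true}$. If $E[Y\mid A,D]$ and $E[A\mid D]$ are one nondecreasing and the other nonincreasing in $D$, then $RD_{obs}\le RD_{true}$.
   Context: $RD_{true}=E[Y|a,c]p(c)+E[Y|a,\overline{c}]p(\overline{c})-E[Y|\overline{a},c]p(c)-E[Y|\overline{a},\overline{c}]p(\overline{c})$; $RD_{obs}=E[Y|a,d]p(d)+E[Y|a,\overline{d}]p(\overline{d})-E[Y|\overline{a},d]p(d)-E[Y|\overline{a},\overline{d}]p(\overline{d})$. $E[Y\mid A,D]$ is nondecreasing in $D$ if $E[Y\mid a,d]\ge E[Y\mid a,\overline{d}]$ and $E[Y\mid \overline{a},d]\ge E[Y\mid \overline{a},\overline{d}]$, nonincreasing if both are reversed. With $a=1,\overline{a}=0$, $E[A\mid D]=p(a\mid D)$ is nondecreasing in $D$ if $p(a\mid d)\ge p(a\mid\overline{d})$ and nonincreasing if $p(a\mid d)\le p(a\mid\overline{d})$. *)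

theory Defs
  imports "HOL-Probability.Probability"
begin

text \<open>Binary variables are modelled as bool-valued random variables; the value
  True stands for a, c, d (and a = 1), False for the barred values.\<close>

definition ev :: "'s measure \<Rightarrow> ('s \<Rightarrow> bool) \<Rightarrow> 's set" where
  "ev M P = {\<omega> \<in> space M. P \<omega>}"

definition cprob :: "'s measure \<Rightarrow> ('s \<Rightarrow> bool) \<Rightarrow> ('s \<Rightarrow> bool) \<Rightarrow> real" where
  "cprob M P Q = measure M (ev M (\<lambda>\<omega>. P \<omega> \<and> Q \<omega>)) / measure M (ev M Q)"

definition cexp :: "'s measure \<Rightarrow> ('s \<Rightarrow> real) \<Rightarrow> ('s \<Rightarrow> bool) \<Rightarrow> real" where
  "cexp M Y Q = (\<integral>\<omega>. indicator (ev M Q) \<omega> * Y \<omega> \<partial>M) / measure M (ev M Q)"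

definition RD :: "'s measure \<Rightarrow> ('s \<Rightarrow> bool) \<Rightarrow> ('s \<Rightarrow> bool) \<Rightarrow> ('s \<Rightarrow> real) \<Rightarrow> real" where
  "RD M A Z Y =
     cexp M Y (\<lambda>\<omega>. A \<omega> \<and> Z \<omega>) * measure M (ev M Z)
   + cexp M Y (\<lambda>\<omega>. A \<omega> \<and> \<not> Z \<omega>) * measure M (ev M (\<lambda>\<omega>. \<not> Z \<omega>))
   - cexp M Y (\<lambda>\<omega>. \<not> A \<omega> \<and> Z \<omega>) * measure M (ev M Z)
   - cexp M Y (\<lambda>\<omega>. \<not> A \<omega> \<and> \<not> Z \<omega>) * measure M (ev M (\<lambda>\<omega>. \<not> Z \<omega>))"

definition EY_nondec :: "'s measure \<Rightarrow> ('s \<Rightarrow> bool) \<Rightarrow> ('s \<Rightarrow> bool) \<Rightarrow> ('s \<Rightarrow> real) \<Rightarrow> bool" where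
  "EY_nondec M A D Y \<longleftrightarrow> (\<forall>x. cexp M Y (\<lambda>\<omega>. A \<omega> = x \<and> D \<omega>) \<ge> cexp M Y (\<lambda>\<omega>. A \<omega> = x \<and> \<not> D \<omega>))"

definition EY_noninc :: "'s measure \<Rightarrow> ('s \<Rightarrow> bool) \<Rightarrow> ('s \<Rightarrow> bool) \<Rightarrow> ('s \<Rightarrow> real) \<Rightarrow> bool" where
  "EY_noninc M A D Y \<longleftrightarrow> (\<forall>x. cexp M Y (\<lambda>\<omega>. A \<omega> = x \<and> D \<omega>) \<le> cexp M Y (\<lambda>\<omega>. A \<omega> = x \<and> \<not> D \<omega>))"

definition EA_nondec :: "'s measure \<Rightarrow> ('s \<Rightarrow> bool) \<Rightarrow> ('s \<Rightarrow> bool) \<Rightarrow> bool" where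
  "EA_nondec M A D \<longleftrightarrow> cprob M A D \<ge> cprob M A (\<lambda>\<omega>. \<not> D \<omega>)"

definition EA_noninc :: "'s measure \<Rightarrow> ('s \<Rightarrow> bool) \<Rightarrow> ('s \<Rightarrow> bool) \<Rightarrow> bool" where
  "EA_noninc M A D \<longleftrightarrow> cprob M A D \<le> cprob M A (\<lambda>\<omega>. \<not> D \<omega>)"

end

theory Submission
  imports Defs
begin

(* Write w z = p(D = z), q z = p(c | z), r y = p(a | y) and m x y = E[Y | A = x, C = y].
   The factorization makes E[Y | x, z] the average of m x c and m x c' with weights
   q z p(x | c) and (1 - q z) p(x | c'), whereas RD_true averages them with weights q z and
   1 - q z. Comparing the two averages stratum by stratum gives
     RD_obs - RD_true = sum over z, x of  w z q z (1 - q z) / p(x | z) * (r c - r c') (m x c - m x c'),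
   while E[Y | A, D] and p(a | D) move in D with the signs of (q d - q d') (m x c - m x c') and
   (q d - q d') (r c - r c'). Dependence of C and D means q d != q d', so the sign of every
   summand is the product of the two directions of monotonicity. *)

definition wmean :: "real \<Rightarrow> real \<Rightarrow> real \<Rightarrow> real \<Rightarrow> real" where
  "wmean u v s t = (u * s + v * t) / (u + v)"

lemma wmean_diff:
  assumes "u + v \<noteq> 0" "u' + v' \<noteq> 0"
  shows "wmean u v s t - wmean u' v' s t = (s - t) * (u * v' - u' * v) / ((u + v) * (u' + v'))"
  using assms by (simp add: wmean_def field_simps)

lemma wmean_mult_weights_minus_mean:
  assumes "c1 + c0 = 1" "c1 * a1 + c0 * a0 \<noteq> 0"
  shows "wmean (c1 * a1) (c0 * a0) s t - (c1 * s + c0 * t)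
       = c1 * c0 * (a1 - a0) * (s - t) / (c1 * a1 + c0 * a0)"
proof -
  have "wmean c1 c0 s t = c1 * s + c0 * t"
    using assms(1) by (simp add: wmean_def)
  moreover have "(s - t) * (c1 * a1 * c0 - c1 * (c0 * a0)) = c1 * c0 * (a1 - a0) * (s - t)"
    by (simp add: algebra_simps)
  ultimately show ?thesis
    using wmean_diff[of "c1 * a1" "c0 * a0" c1 c0 s t] assms by simp
qed

lemma le_iff_sign_of_diff:
  fixes a b p k :: "'a::linordered_idom"
  assumes "b - a = p * k" "0 < k"
  shows "a \<le> b \<longleftrightarrow> 0 \<le> p" and "b \<le> a \<longleftrightarrow> p \<le> 0"
proof -
  have "a \<le> b \<longleftrightarrow> 0 \<le> p * k" "b \<le> a \<longleftrightarrow> p * k \<le> 0"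
    by (simp_all flip: assms(1))
  then show "a \<le> b \<longleftrightarrow> 0 \<le> p" "b \<le> a \<longleftrightarrow> p \<le> 0"
    using assms(2) by (auto simp: zero_le_mult_iff mult_le_0_iff)
qed

lemma sign_mult_common_factor:
  fixes a b s :: "'a::linordered_idom"
  assumes "s \<noteq> 0"
  shows "0 \<le> (s * a) * (s * b) \<longleftrightarrow> 0 \<le> a * b" and "(s * a) * (s * b) \<le> 0 \<longleftrightarrow> a * b \<le> 0"
proof -
  have "(s * a) * (s * b) - 0 = (a * b) * s\<^sup>2"
    by (simp add: power2_eq_square algebra_simps)
  moreover have "0 < s\<^sup>2"
    using assms by simp
  ultimately show "0 \<le> (s * a) * (s * b) \<longleftrightarrow> 0 \<le> a * b" "(s * a) * (s * b) \<le> 0 \<longleftrightarrow> a * b \<le> 0"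
    by (rule le_iff_sign_of_diff)+
qed

lemma ev_sets[measurable]: "Measurable.pred M P \<Longrightarrow> ev M P \<in> sets M"
  unfolding ev_def by measurable

lemma (in finite_measure) measure_ev_sum_values:
  fixes X :: "'a \<Rightarrow> 'b::finite"
  assumes [measurable]: "X \<in> M \<rightarrow>\<^sub>M count_space UNIV" "Measurable.pred M Q"
  shows "measure M (ev M Q) = (\<Sum>y\<in>UNIV. measure M (ev M (\<lambda>\<omega>. X \<omega> = y \<and> Q \<omega>)))"
proof -
  have "ev M Q = (\<Union>y\<in>UNIV. ev M (\<lambda>\<omega>. X \<omega> = y \<and> Q \<omega>))"
    by (auto simp: ev_def)
  moreover have "disjoint_family (\<lambda>y. ev M (\<lambda>\<omega>. X \<omega> = y \<and> Q \<omega>))"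
    by (auto simp: disjoint_family_on_def ev_def)
  ultimately show ?thesis
    by (simp add: finite_measure_finite_Union[where S=UNIV] image_subset_iff)
qed

lemma (in finite_measure) measure_ev_mem_sum_values:
  fixes W :: "'a \<Rightarrow> 'b::finite"
  assumes [measurable]: "W \<in> M \<rightarrow>\<^sub>M count_space UNIV" "Measurable.pred M P"
  shows "measure M (ev M (\<lambda>\<omega>. W \<omega> \<in> a \<and> P \<omega>))
       = (\<Sum>x\<in>UNIV. of_bool (x \<in> a) * measure M (ev M (\<lambda>\<omega>. W \<omega> = x \<and> P \<omega>)))"
proof -
  have "measure M (ev M (\<lambda>\<omega>. W \<omega> \<in> a \<and> P \<omega>))
      = (\<Sum>x\<in>UNIV. measure M (ev M (\<lambda>\<omega>. W \<omega> = x \<and> W \<omega> \<in> a \<and> P \<omega>)))"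
    by (rule measure_ev_sum_values) measurable
  moreover have "measure M (ev M (\<lambda>\<omega>. W \<omega> = x \<and> W \<omega> \<in> a \<and> P \<omega>))
      = of_bool (x \<in> a) * measure M (ev M (\<lambda>\<omega>. W \<omega> = x \<and> P \<omega>))" for x
  proof -
    have "ev M (\<lambda>\<omega>. W \<omega> = x \<and> W \<omega> \<in> a \<and> P \<omega>) = (if x \<in> a then ev M (\<lambda>\<omega>. W \<omega> = x \<and> P \<omega>) else {})"
      by (auto simp: ev_def)
    then show ?thesis
      by simp
  qed
  ultimately show ?thesis
    by simp
qed

lemma integral_indicator_ev_sum_values:
  fixes X :: "'a \<Rightarrow> 'b::finite" and f :: "'a \<Rightarrow> real"
  assumes [measurable]: "X \<in> M \<rightarrow>\<^sub>M count_space UNIV" "Measurable.pred M Q"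
    and f: "integrable M f"
  shows "(\<integral>\<omega>. indicator (ev M Q) \<omega> * f \<omega> \<partial>M)
       = (\<Sum>y\<in>UNIV. \<integral>\<omega>. indicator (ev M (\<lambda>\<omega>. X \<omega> = y \<and> Q \<omega>)) \<omega> * f \<omega> \<partial>M)"
proof -
  have pointwise: "indicator (ev M Q) \<omega> * f \<omega>
      = (\<Sum>y\<in>UNIV. indicator (ev M (\<lambda>\<omega>. X \<omega> = y \<and> Q \<omega>)) \<omega> * f \<omega>)" for \<omega>
  proof -
    have "indicator (ev M (\<lambda>\<omega>. X \<omega> = y \<and> Q \<omega>)) \<omega>
        = (if y = X \<omega> then indicator (ev M Q) \<omega> else 0 :: real)" for y
      by (auto simp: ev_def indicator_def)
    then show ?thesis
      by (simp add: sum_distrib_right[symmetric])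
  qed
  have "integrable M (\<lambda>\<omega>. indicator S \<omega> * f \<omega>)" if "S \<in> sets M" for S
    using integrable_mult_indicator[OF that f] by simp
  then show ?thesis
    unfolding pointwise
    by (intro Bochner_Integration.integral_sum[where f="\<lambda>y \<omega>. indicator (ev M (\<lambda>\<omega>. X \<omega> = y \<and> Q \<omega>)) \<omega> * f \<omega>"])
      measurable
qed

lemma (in finite_measure) sum_cprob_values:
  fixes X :: "'a \<Rightarrow> 'b::finite"
  assumes "X \<in> M \<rightarrow>\<^sub>M count_space UNIV" "Measurable.pred M Q" "measure M (ev M Q) \<noteq> 0"
  shows "(\<Sum>y\<in>UNIV. cprob M (\<lambda>\<omega>. X \<omega> = y) Q) = 1"
  using measure_ev_sum_values[OF assms(1,2)] assms(3)
  by (simp add: cprob_def flip: sum_divide_distrib)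

lemma (in finite_measure) integral_indicator_ev_scale:
  fixes Y :: "'a \<Rightarrow> real"
  assumes [measurable]: "Y \<in> borel_measurable M"
    and [measurable]: "Measurable.pred M P" "Measurable.pred M Q"
    and "0 \<le> k"
    and law: "\<And>B. B \<in> sets borel \<Longrightarrow>
      measure M (ev M (\<lambda>\<omega>. P \<omega> \<and> Y \<omega> \<in> B)) = k * measure M (ev M (\<lambda>\<omega>. Q \<omega> \<and> Y \<omega> \<in> B))"
  shows "(\<integral>\<omega>. indicator (ev M P) \<omega> * Y \<omega> \<partial>M) = k * (\<integral>\<omega>. indicator (ev M Q) \<omega> * Y \<omega> \<partial>M)"
proof -
  define law_on where "law_on R = distr (density M (\<lambda>\<omega>. ennreal (indicator (ev M R) \<omega>))) borel Y" for R
  have emeasure_law_on: "emeasure (law_on R) B = measure M (ev M (\<lambda>\<omega>. R \<omega> \<and> Y \<omega> \<in> B))"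
    if [measurable]: "Measurable.pred M R" "B \<in> sets borel" for R B
  proof -
    have "emeasure (law_on R) B
        = (\<integral>\<^sup>+\<omega>. ennreal (indicator (ev M R) \<omega>) * indicator (Y -` B \<inter> space M) \<omega> \<partial>M)"
      unfolding law_on_def by (simp add: emeasure_distr emeasure_density)
    also have "\<dots> = (\<integral>\<^sup>+\<omega>. indicator (ev M (\<lambda>\<omega>. R \<omega> \<and> Y \<omega> \<in> B)) \<omega> \<partial>M)"
      by (intro nn_integral_cong) (auto simp: ev_def split: split_indicator)
    finally show ?thesis
      by (simp add: emeasure_eq_measure)
  qed
  have integral_law_on: "(\<integral>t. t \<partial>law_on R) = (\<integral>\<omega>. indicator (ev M R) \<omega> * Y \<omega> \<partial>M)"
    if "Measurable.pred M R" for R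
    unfolding law_on_def using that by (simp add: integral_distr integral_density)
  have "law_on P = density (law_on Q) (\<lambda>_. ennreal k)"
  proof (rule measure_eqI)
    fix B assume "B \<in> sets (law_on P)"
    then have [measurable]: "B \<in> sets borel"
      by (simp add: law_on_def)
    have "emeasure (density (law_on Q) (\<lambda>_. ennreal k)) B = ennreal k * emeasure (law_on Q) B"
      by (rule emeasure_density_const) (simp add: law_on_def)
    then show "emeasure (law_on P) B = emeasure (density (law_on Q) (\<lambda>_. ennreal k)) B"
      using \<open>0 \<le> k\<close> by (simp add: emeasure_law_on law ennreal_mult)
  qed (simp add: law_on_def)
  then have "(\<integral>t. t \<partial>law_on P) = k * (\<integral>t. t \<partial>law_on Q)"
    using \<open>0 \<le> k\<close> by (simp add: integral_density law_on_def)
  then show ?thesis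
    by (simp add: integral_law_on)
qed

lemma (in prob_space) indep_var_finite_valuedI:
  fixes X Z :: "'a \<Rightarrow> 'b::finite"
  assumes X[measurable]: "X \<in> M \<rightarrow>\<^sub>M count_space UNIV"
    and Z[measurable]: "Z \<in> M \<rightarrow>\<^sub>M count_space UNIV"
    and point: "\<And>x z. prob (ev M (\<lambda>\<omega>. X \<omega> = x \<and> Z \<omega> = z))
                       = prob (ev M (\<lambda>\<omega>. X \<omega> = x)) * prob (ev M (\<lambda>\<omega>. Z \<omega> = z))"
  shows "indep_var (count_space UNIV) X (count_space UNIV) Z"
proof -
  have marginal: "prob (ev M (\<lambda>\<omega>. W \<omega> \<in> a)) = (\<Sum>x\<in>UNIV. of_bool (x \<in> a) * prob (ev M (\<lambda>\<omega>. W \<omega> = x)))"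
    if "W \<in> M \<rightarrow>\<^sub>M count_space UNIV" for W :: "'a \<Rightarrow> 'b" and a
    using measure_ev_mem_sum_values[OF that, of "\<lambda>_. True"] by simp
  have "prob (ev M (\<lambda>\<omega>. X \<omega> = x \<and> Z \<omega> \<in> b))
      = (\<Sum>z\<in>UNIV. of_bool (z \<in> b) * prob (ev M (\<lambda>\<omega>. X \<omega> = x \<and> Z \<omega> = z)))" for x b
    using measure_ev_mem_sum_values[of Z "\<lambda>\<omega>. X \<omega> = x" b] by (simp add: conj_commute)
  then have "prob (ev M (\<lambda>\<omega>. X \<omega> \<in> a \<and> Z \<omega> \<in> b))
      = prob (ev M (\<lambda>\<omega>. X \<omega> \<in> a)) * prob (ev M (\<lambda>\<omega>. Z \<omega> \<in> b))" for a b
    using measure_ev_mem_sum_values[of X "\<lambda>\<omega>. Z \<omega> \<in> b" a]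
    by (simp add: marginal point sum_product ac_simps)
  moreover have "W -` a \<inter> space M = ev M (\<lambda>\<omega>. W \<omega> \<in> a)" for W :: "'a \<Rightarrow> 'b" and a
    by (auto simp: ev_def)
  ultimately have indep: "indep_set {X -` a \<inter> space M |a. a \<in> sets (count_space UNIV)}
                                    {Z -` b \<inter> space M |b. b \<in> sets (count_space UNIV)}"
    unfolding indep_sets2_eq by (auto simp: ev_def Int_def conj_ac)
  show ?thesis
    unfolding indep_var_def indep_vars_def2
  proof
    show "\<forall>i\<in>UNIV. random_variable (case_bool (count_space UNIV) (count_space UNIV) i) (case_bool X Z i)"
      by (simp split: bool.split)
    show "indep_sets (\<lambda>i. {case_bool X Z i -` A \<inter> space M |A.
        A \<in> sets (case_bool (count_space UNIV) (count_space UNIV) i)}) UNIV"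
      using indep unfolding indep_set_def
      by (rule indep_sets_cong[THEN iffD1, rotated 2]) (auto split: bool.split)
  qed
qed

lemma RD_eq_sum:
  "RD M A Z Y = (\<Sum>z\<in>UNIV. measure M (ev M (\<lambda>\<omega>. Z \<omega> = z))
      * (cexp M Y (\<lambda>\<omega>. A \<omega> = True \<and> Z \<omega> = z) - cexp M Y (\<lambda>\<omega>. A \<omega> = False \<and> Z \<omega> = z)))"
  by (simp add: RD_def UNIV_bool algebra_simps)

locale proxy_adjustment = prob_space M for M :: "'s measure" +
  fixes A C D :: "'s \<Rightarrow> bool" and Y :: "'s \<Rightarrow> real"
  assumes A_measurable[measurable]: "A \<in> M \<rightarrow>\<^sub>M count_space UNIV"
    and C_measurable[measurable]: "C \<in> M \<rightarrow>\<^sub>M count_space UNIV"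
    and D_measurable[measurable]: "D \<in> M \<rightarrow>\<^sub>M count_space UNIV"
    and Y_measurable[measurable]: "Y \<in> borel_measurable M"
    and Y_integrable: "integrable M Y"
    and factorization: "\<forall>x y z B. B \<in> sets borel \<longrightarrow>
        measure M (ev M (\<lambda>\<omega>. A \<omega> = x \<and> C \<omega> = y \<and> D \<omega> = z \<and> Y \<omega> \<in> B))
        = measure M (ev M (\<lambda>\<omega>. D \<omega> = z))
          * cprob M (\<lambda>\<omega>. C \<omega> = y) (\<lambda>\<omega>. D \<omega> = z)
          * cprob M (\<lambda>\<omega>. A \<omega> = x) (\<lambda>\<omega>. C \<omega> = y)
          * cprob M (\<lambda>\<omega>. Y \<omega> \<in> B) (\<lambda>\<omega>. A \<omega> = x \<and> C \<omega> = y)"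
    and cell_pos: "\<forall>x y z. measure M (ev M (\<lambda>\<omega>. A \<omega> = x \<and> C \<omega> = y \<and> D \<omega> = z)) > 0"
begin

definition pD :: "bool \<Rightarrow> real" where
  "pD z = measure M (ev M (\<lambda>\<omega>. D \<omega> = z))"

definition pCD :: "bool \<Rightarrow> bool \<Rightarrow> real" where
  "pCD y z = cprob M (\<lambda>\<omega>. C \<omega> = y) (\<lambda>\<omega>. D \<omega> = z)"

definition pAC :: "bool \<Rightarrow> bool \<Rightarrow> real" where
  "pAC x y = cprob M (\<lambda>\<omega>. A \<omega> = x) (\<lambda>\<omega>. C \<omega> = y)"

definition mAC :: "bool \<Rightarrow> bool \<Rightarrow> real" where
  "mAC x y = cexp M Y (\<lambda>\<omega>. A \<omega> = x \<and> C \<omega> = y)"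

lemma measure_ev_pos:
  assumes "Measurable.pred M P" "\<And>\<omega>. A \<omega> = x \<and> C \<omega> = y \<and> D \<omega> = z \<Longrightarrow> P \<omega>"
  shows "0 < measure M (ev M P)"
proof -
  have "measure M (ev M (\<lambda>\<omega>. A \<omega> = x \<and> C \<omega> = y \<and> D \<omega> = z)) \<le> measure M (ev M P)"
    using assms by (intro finite_measure_mono) (auto simp: ev_def)
  then show ?thesis
    using cell_pos by (meson less_le_trans)
qed

lemma pD_pos: "0 < pD z"
  unfolding pD_def by (rule measure_ev_pos[of _ True True]) auto

lemma sum_pD: "(\<Sum>z\<in>UNIV. pD z) = 1"
  using measure_ev_sum_values[of D "\<lambda>_. True"] by (simp add: pD_def ev_def prob_space)

lemma pCD_pos: "0 < pCD y z"
  unfolding pCD_def cprob_def using pD_pos[of z]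
  by (auto simp: pD_def intro!: divide_pos_pos measure_ev_pos[of _ True y z])

lemma pAC_pos: "0 < pAC x y"
  unfolding pAC_def cprob_def
  by (auto intro!: divide_pos_pos measure_ev_pos[of _ x y True])

lemma sum_pCD: "(\<Sum>y\<in>UNIV. pCD y z) = 1"
  unfolding pCD_def using pD_pos[of z]
  by (intro sum_cprob_values) (auto simp: pD_def)

lemma sum_pAC: "(\<Sum>x\<in>UNIV. pAC x y) = 1"
proof -
  have "0 < measure M (ev M (\<lambda>\<omega>. C \<omega> = y))"
    by (rule measure_ev_pos[of _ True y True]) auto
  then show ?thesis
    unfolding pAC_def by (intro sum_cprob_values) auto
qed

lemma prob_C_D: "measure M (ev M (\<lambda>\<omega>. C \<omega> = y \<and> D \<omega> = z)) = pD z * pCD y z"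
  using pD_pos[of z] by (simp add: pCD_def cprob_def pD_def)

lemma prob_cell: "measure M (ev M (\<lambda>\<omega>. A \<omega> = x \<and> C \<omega> = y \<and> D \<omega> = z)) = pD z * pCD y z * pAC x y"
proof -
  have "0 < measure M (ev M (\<lambda>\<omega>. A \<omega> = x \<and> C \<omega> = y))"
    by (rule measure_ev_pos[of _ x y True]) auto
  then have "cprob M (\<lambda>\<omega>. Y \<omega> \<in> UNIV) (\<lambda>\<omega>. A \<omega> = x \<and> C \<omega> = y) = 1"
    by (simp add: cprob_def)
  moreover have "measure M (ev M (\<lambda>\<omega>. A \<omega> = x \<and> C \<omega> = y \<and> D \<omega> = z \<and> Y \<omega> \<in> UNIV))
      = pD z * pCD y z * pAC x y * cprob M (\<lambda>\<omega>. Y \<omega> \<in> UNIV) (\<lambda>\<omega>. A \<omega> = x \<and> C \<omega> = y)"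
    unfolding pD_def pCD_def pAC_def by (rule factorization[rule_format]) simp
  ultimately show ?thesis
    by simp
qed

lemma integral_cell:
  "(\<integral>\<omega>. indicator (ev M (\<lambda>\<omega>. A \<omega> = x \<and> C \<omega> = y \<and> D \<omega> = z)) \<omega> * Y \<omega> \<partial>M)
     = pD z * pCD y z * pAC x y * mAC x y"
proof -
  let ?T = "ev M (\<lambda>\<omega>. A \<omega> = x \<and> C \<omega> = y)"
  have T_pos: "0 < measure M ?T"
    by (rule measure_ev_pos[of _ x y True]) auto
  (* By the factorization, the law of Y on the cell is a multiple of its law on {A = x, C = y}. *)
  have "(\<integral>\<omega>. indicator (ev M (\<lambda>\<omega>. A \<omega> = x \<and> C \<omega> = y \<and> D \<omega> = z)) \<omega> * Y \<omega> \<partial>M)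
      = pD z * pCD y z * pAC x y / measure M ?T * (\<integral>\<omega>. indicator ?T \<omega> * Y \<omega> \<partial>M)"
  proof (rule integral_indicator_ev_scale)
    fix B :: "real set"
    assume "B \<in> sets borel"
    then have "measure M (ev M (\<lambda>\<omega>. A \<omega> = x \<and> C \<omega> = y \<and> D \<omega> = z \<and> Y \<omega> \<in> B))
        = pD z * pCD y z * pAC x y * cprob M (\<lambda>\<omega>. Y \<omega> \<in> B) (\<lambda>\<omega>. A \<omega> = x \<and> C \<omega> = y)"
      unfolding pD_def pCD_def pAC_def by (rule factorization[rule_format])
    moreover have "ev M (\<lambda>\<omega>. Y \<omega> \<in> B \<and> A \<omega> = x \<and> C \<omega> = y) = ev M (\<lambda>\<omega>. (A \<omega> = x \<and> C \<omega> = y) \<and> Y \<omega> \<in> B)"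
      by (auto simp: ev_def)
    ultimately show "measure M (ev M (\<lambda>\<omega>. (A \<omega> = x \<and> C \<omega> = y \<and> D \<omega> = z) \<and> Y \<omega> \<in> B))
        = pD z * pCD y z * pAC x y / measure M ?T * measure M (ev M (\<lambda>\<omega>. (A \<omega> = x \<and> C \<omega> = y) \<and> Y \<omega> \<in> B))"
      by (simp add: cprob_def)
  qed (use T_pos pD_pos pCD_pos pAC_pos in \<open>auto intro: less_imp_le\<close>)
  then show ?thesis
    using T_pos by (simp add: mAC_def cexp_def)
qed

lemma prob_C: "measure M (ev M (\<lambda>\<omega>. C \<omega> = y)) = (\<Sum>z\<in>UNIV. pD z * pCD y z)"
proof -
  have "measure M (ev M (\<lambda>\<omega>. C \<omega> = y)) = (\<Sum>z\<in>UNIV. measure M (ev M (\<lambda>\<omega>. D \<omega> = z \<and> C \<omega> = y)))"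
    by (rule measure_ev_sum_values) measurable
  also have "\<dots> = (\<Sum>z\<in>UNIV. pD z * pCD y z)"
    by (simp add: prob_C_D[symmetric] conj_commute)
  finally show ?thesis .
qed

lemma ev_C_A_D: "ev M (\<lambda>\<omega>. C \<omega> = y \<and> A \<omega> = x \<and> D \<omega> = z) = ev M (\<lambda>\<omega>. A \<omega> = x \<and> C \<omega> = y \<and> D \<omega> = z)"
  by (auto simp: ev_def)

lemma prob_A_D: "measure M (ev M (\<lambda>\<omega>. A \<omega> = x \<and> D \<omega> = z)) = pD z * (\<Sum>y\<in>UNIV. pCD y z * pAC x y)"
proof -
  have "measure M (ev M (\<lambda>\<omega>. A \<omega> = x \<and> D \<omega> = z))
      = (\<Sum>y\<in>UNIV. measure M (ev M (\<lambda>\<omega>. C \<omega> = y \<and> A \<omega> = x \<and> D \<omega> = z)))"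
    by (rule measure_ev_sum_values) measurable
  also have "\<dots> = pD z * (\<Sum>y\<in>UNIV. pCD y z * pAC x y)"
    by (simp add: ev_C_A_D prob_cell sum_distrib_left mult.assoc)
  finally show ?thesis .
qed

lemma pCD_False: "pCD False z = 1 - pCD True z"
  using sum_pCD[of z] by (simp add: UNIV_bool)

lemma pAC_False: "pAC False y = 1 - pAC True y"
  using sum_pAC[of y] by (simp add: UNIV_bool)

lemma cprob_A_D: "cprob M (\<lambda>\<omega>. A \<omega> = x) (\<lambda>\<omega>. D \<omega> = z) = pCD True z * pAC x True + pCD False z * pAC x False"
  using pD_pos[of z] by (simp add: cprob_def prob_A_D UNIV_bool flip: pD_def)

lemma cprob_A_D_pos: "0 < cprob M (\<lambda>\<omega>. A \<omega> = x) (\<lambda>\<omega>. D \<omega> = z)"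
  unfolding cprob_A_D using pCD_pos pAC_pos by (simp add: add_pos_pos)

lemma cexp_A_D:
  "cexp M Y (\<lambda>\<omega>. A \<omega> = x \<and> D \<omega> = z)
     = wmean (pCD True z * pAC x True) (pCD False z * pAC x False) (mAC x True) (mAC x False)"
proof -
  have "(\<integral>\<omega>. indicator (ev M (\<lambda>\<omega>. A \<omega> = x \<and> D \<omega> = z)) \<omega> * Y \<omega> \<partial>M)
      = (\<Sum>y\<in>UNIV. \<integral>\<omega>. indicator (ev M (\<lambda>\<omega>. C \<omega> = y \<and> A \<omega> = x \<and> D \<omega> = z)) \<omega> * Y \<omega> \<partial>M)"
    by (rule integral_indicator_ev_sum_values[OF _ _ Y_integrable]) measurable
  also have "\<dots> = pD z * (\<Sum>y\<in>UNIV. pCD y z * pAC x y * mAC x y)"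
    by (simp add: ev_C_A_D integral_cell sum_distrib_left mult.assoc)
  finally show ?thesis
    using pD_pos[of z] by (simp add: cexp_def prob_A_D wmean_def UNIV_bool add.commute)
qed

lemma cexp_A_D_diff:
  "cexp M Y (\<lambda>\<omega>. A \<omega> = x \<and> D \<omega>) - cexp M Y (\<lambda>\<omega>. A \<omega> = x \<and> \<not> D \<omega>)
     = (pCD True True - pCD True False) * (mAC x True - mAC x False)
       * (pAC x True * pAC x False
          / (cprob M (\<lambda>\<omega>. A \<omega> = x) D * cprob M (\<lambda>\<omega>. A \<omega> = x) (\<lambda>\<omega>. \<not> D \<omega>)))"
proof -
  have "pCD True True * pAC x True * (pCD False False * pAC x False)
        - pCD True False * pAC x True * (pCD False True * pAC x False)
      = pAC x True * pAC x False * (pCD True True - pCD True False)"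
    by (simp add: pCD_False algebra_simps)
  then show ?thesis
    using cexp_A_D[of x True] cexp_A_D[of x False] cprob_A_D[of x True] cprob_A_D[of x False]
      cprob_A_D_pos[of x True] cprob_A_D_pos[of x False]
    by (simp add: wmean_diff)
qed

lemma cexp_A_D_weight_pos:
  "0 < pAC x True * pAC x False
         / (cprob M (\<lambda>\<omega>. A \<omega> = x) D * cprob M (\<lambda>\<omega>. A \<omega> = x) (\<lambda>\<omega>. \<not> D \<omega>))"
  using pAC_pos cprob_A_D_pos[of x True] cprob_A_D_pos[of x False] by simp

lemma EY_nondec_iff:
  "EY_nondec M A D Y \<longleftrightarrow> (\<forall>x. 0 \<le> (pCD True True - pCD True False) * (mAC x True - mAC x False))"
  unfolding EY_nondec_def le_iff_sign_of_diff(1)[OF cexp_A_D_diff cexp_A_D_weight_pos] ..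

lemma EY_noninc_iff:
  "EY_noninc M A D Y \<longleftrightarrow> (\<forall>x. (pCD True True - pCD True False) * (mAC x True - mAC x False) \<le> 0)"
  unfolding EY_noninc_def le_iff_sign_of_diff(2)[OF cexp_A_D_diff cexp_A_D_weight_pos] ..

lemma cprob_A_D_diff:
  "cprob M A D - cprob M A (\<lambda>\<omega>. \<not> D \<omega>) = (pCD True True - pCD True False) * (pAC True True - pAC True False)"
  using cprob_A_D[of True True] cprob_A_D[of True False] by (simp add: pCD_False algebra_simps)

lemma EA_nondec_iff:
  "EA_nondec M A D \<longleftrightarrow> 0 \<le> (pCD True True - pCD True False) * (pAC True True - pAC True False)"
  using cprob_A_D_diff unfolding EA_nondec_def by linarith

lemma EA_noninc_iff:
  "EA_noninc M A D \<longleftrightarrow> (pCD True True - pCD True False) * (pAC True True - pAC True False) \<le> 0"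
  using cprob_A_D_diff unfolding EA_noninc_def by linarith

lemma stratum_bias:
  "cexp M Y (\<lambda>\<omega>. A \<omega> = x \<and> D \<omega> = z) - (pCD True z * mAC x True + pCD False z * mAC x False)
     = pCD True z * pCD False z * (pAC x True - pAC x False) * (mAC x True - mAC x False)
       / cprob M (\<lambda>\<omega>. A \<omega> = x) (\<lambda>\<omega>. D \<omega> = z)"
  unfolding cexp_A_D cprob_A_D
  by (rule wmean_mult_weights_minus_mean) (use sum_pCD[of z] cprob_A_D_pos[of x z] cprob_A_D in \<open>auto simp: UNIV_bool\<close>)

lemma RD_D_minus_RD_C:
  "RD M A D Y - RD M A C Y
     = (\<Sum>z\<in>UNIV. \<Sum>x\<in>UNIV. pD z * pCD True z * pCD False z / cprob M (\<lambda>\<omega>. A \<omega> = x) (\<lambda>\<omega>. D \<omega> = z)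
          * ((pAC True True - pAC True False) * (mAC x True - mAC x False)))"
proof -
  have "RD M A C Y = (\<Sum>z\<in>UNIV. pD z * (\<Sum>y\<in>UNIV. pCD y z * (mAC True y - mAC False y)))"
    by (simp add: RD_eq_sum prob_C mAC_def UNIV_bool algebra_simps)
  moreover have "RD M A D Y = (\<Sum>z\<in>UNIV. pD z
      * (cexp M Y (\<lambda>\<omega>. A \<omega> = True \<and> D \<omega> = z) - cexp M Y (\<lambda>\<omega>. A \<omega> = False \<and> D \<omega> = z)))"
    by (simp add: RD_eq_sum pD_def)
  ultimately have "RD M A D Y - RD M A C Y = (\<Sum>z\<in>UNIV. pD z
      * ((cexp M Y (\<lambda>\<omega>. A \<omega> = True \<and> D \<omega> = z) - (pCD True z * mAC True True + pCD False z * mAC True False))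
       - (cexp M Y (\<lambda>\<omega>. A \<omega> = False \<and> D \<omega> = z) - (pCD True z * mAC False True + pCD False z * mAC False False))))"
    by (simp add: UNIV_bool algebra_simps)
  also have "\<dots> = (\<Sum>z\<in>UNIV. \<Sum>x\<in>UNIV. pD z * pCD True z * pCD False z / cprob M (\<lambda>\<omega>. A \<omega> = x) (\<lambda>\<omega>. D \<omega> = z)
          * ((pAC True True - pAC True False) * (mAC x True - mAC x False)))"
    unfolding stratum_bias by (simp add: UNIV_bool pAC_False algebra_simps add_divide_distrib diff_divide_distrib)
  finally show ?thesis .
qed

lemma bias_weight_pos: "0 < pD z * pCD True z * pCD False z / cprob M (\<lambda>\<omega>. A \<omega> = x) (\<lambda>\<omega>. D \<omega> = z)"
  using pD_pos pCD_pos cprob_A_D_pos by simp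

lemma RD_C_le_RD_D:
  assumes "\<forall>x. 0 \<le> (pAC True True - pAC True False) * (mAC x True - mAC x False)"
  shows "RD M A C Y \<le> RD M A D Y"
proof -
  have "0 \<le> RD M A D Y - RD M A C Y"
    unfolding RD_D_minus_RD_C using assms
    by (intro sum_nonneg mult_nonneg_nonneg[OF less_imp_le[OF bias_weight_pos]]) blast
  then show ?thesis
    by simp
qed

lemma RD_D_le_RD_C:
  assumes "\<forall>x. (pAC True True - pAC True False) * (mAC x True - mAC x False) \<le> 0"
  shows "RD M A D Y \<le> RD M A C Y"
proof -
  have "RD M A D Y - RD M A C Y \<le> 0"
    unfolding RD_D_minus_RD_C using assms
    by (intro sum_nonpos mult_nonneg_nonpos[OF less_imp_le[OF bias_weight_pos]]) blast
  then show ?thesis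
    by simp
qed

lemma pCD_neq_if_dependent:
  assumes "\<not> indep_var (count_space UNIV) C (count_space UNIV) D"
  shows "pCD True True \<noteq> pCD True False"
proof
  assume "pCD True True = pCD True False"
  then have pCD_eq: "pCD y False = pCD y True" for y
    by (cases y) (simp_all add: pCD_False)
  have "prob (ev M (\<lambda>\<omega>. C \<omega> = y \<and> D \<omega> = z)) = prob (ev M (\<lambda>\<omega>. C \<omega> = y)) * prob (ev M (\<lambda>\<omega>. D \<omega> = z))"
    for y z
  proof -
    have "prob (ev M (\<lambda>\<omega>. C \<omega> = y)) = pCD y True"
      using sum_pD by (simp add: prob_C UNIV_bool pCD_eq flip: distrib_right)
    moreover have "pCD y z = pCD y True"
      by (cases z) (simp_all add: pCD_eq)
    ultimately show ?thesis
      by (simp add: prob_C_D mult.commute flip: pD_def)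
  qed
  then have "indep_var (count_space UNIV) C (count_space UNIV) D"
    by (intro indep_var_finite_valuedI) simp_all
  with assms show False ..
qed

end

theorem corollary3:
  fixes M :: "'s measure" and A C D :: "'s \<Rightarrow> bool" and Y :: "'s \<Rightarrow> real"
  assumes "prob_space M"
    and "A \<in> M \<rightarrow>\<^sub>M count_space UNIV"
    and "C \<in> M \<rightarrow>\<^sub>M count_space UNIV"
    and "D \<in> M \<rightarrow>\<^sub>M count_space UNIV"
    and "Y \<in> borel_measurable M" and "integrable M Y"
    and factor: "\<forall>x y z B. B \<in> sets borel \<longrightarrow>
        measure M (ev M (\<lambda>\<omega>. A \<omega> = x \<and> C \<omega> = y \<and> D \<omega> = z \<and> Y \<omega> \<in> B))
        = measure M (ev M (\<lambda>\<omega>. D \<omega> = z))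
          * cprob M (\<lambda>\<omega>. C \<omega> = y) (\<lambda>\<omega>. D \<omega> = z)
          * cprob M (\<lambda>\<omega>. A \<omega> = x) (\<lambda>\<omega>. C \<omega> = y)
          * cprob M (\<lambda>\<omega>. Y \<omega> \<in> B) (\<lambda>\<omega>. A \<omega> = x \<and> C \<omega> = y)"
    and dep: "\<not> prob_space.indep_var M (count_space UNIV) C (count_space UNIV) D"
    and pos: "\<forall>x y z. measure M (ev M (\<lambda>\<omega>. A \<omega> = x \<and> C \<omega> = y \<and> D \<omega> = z)) > 0"
  shows "((EY_nondec M A D Y \<and> EA_nondec M A D) \<or> (EY_noninc M A D Y \<and> EA_noninc M A D)
            \<longrightarrow> RD M A D Y \<ge> RD M A C Y)
       \<and> ((EY_nondec M A D Y \<and> EA_noninc M A D) \<or> (EY_noninc M A D Y \<and> EA_nondec M A D)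
            \<longrightarrow> RD M A D Y \<le> RD M A C Y)"
proof -
  interpret proxy_adjustment M A C D Y
    using assms by (simp add: proxy_adjustment_def proxy_adjustment_axioms_def)
  let ?dq = "pCD True True - pCD True False" and ?da = "pAC True True - pAC True False"
  have dq: "?dq \<noteq> 0"
    using pCD_neq_if_dependent dep by simp
  show ?thesis
  proof (intro conjI impI)
    assume "EY_nondec M A D Y \<and> EA_nondec M A D \<or> EY_noninc M A D Y \<and> EA_noninc M A D"
    then have "0 \<le> (?dq * ?da) * (?dq * (mAC x True - mAC x False))" for x
      unfolding EY_nondec_iff EY_noninc_iff EA_nondec_iff EA_noninc_iff
      by (auto intro: mult_nonneg_nonneg mult_nonpos_nonpos)
    then show "RD M A C Y \<le> RD M A D Y"
      by (intro RD_C_le_RD_D) (simp add: sign_mult_common_factor(1)[OF dq])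
  next
    assume "EY_nondec M A D Y \<and> EA_noninc M A D \<or> EY_noninc M A D Y \<and> EA_nondec M A D"
    then have "(?dq * ?da) * (?dq * (mAC x True - mAC x False)) \<le> 0" for x
      unfolding EY_nondec_iff EY_noninc_iff EA_nondec_iff EA_noninc_iff
      by (auto intro: mult_nonneg_nonpos mult_nonpos_nonneg)
    then show "RD M A D Y \<le> RD M A C Y"
      by (intro RD_D_le_RD_C) (simp add: sign_mult_common_factor(2)[OF dq])
  qed
qed

end
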